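(* Let $\{\lambda_j\}_{j\in\mathbb N}$ be a non-increasing sequence of non-negative reals with $\lambda_1=1$ and $\lim_{j\to\infty}\lambda_j=0$. Then the following are equivalent: (a) $\displaystyle\lim_{\varepsilon\to0}\frac{\ln\ln j(\varepsilon)}{\ln\ln\varepsilon^{-1}}=0$; (b) $\displaystyle\lim_{j\to\infty}\frac{\ln(\ln\frac1{\lambda_j})}{\ln(\ln j)}=\infty$; (c) for every $\delta>0$, $\displaystyle\lim_{\varepsilon\to0}\frac{\ln j(\varepsilon)}{(\ln\varepsilon^{-1})^{\delta}}=0$.
   Context: For $\varepsilon\in(0,1)$, $j(\varepsilon)=\max\{j\in\mathbb N:\lambda_j>\varepsilon^2\}$. If $\lambda_j=0$, $\ln\frac1{\lambda_j}$ is interpreted as $\infty$. *)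

theory Defs
  imports "HOL-Analysis.Analysis"
begin

definition jeps :: "(nat \<Rightarrow> real) \<Rightarrow> real \<Rightarrow> nat" where
  "jeps lam \<epsilon> = Max {j. 1 \<le> j \<and> lam j > \<epsilon>\<^sup>2}"

end

theory Submission
  imports Defs "HOL-Real_Asymp.Real_Asymp"
begin

(* Write f(\<epsilon>) = ln j(\<epsilon>) and L(\<epsilon>) = ln(1/\<epsilon>). Conditions (a) and (c) are both equivalent
   to: for every \<eta> > 0, eventually f \<le> L^\<eta>. This holds for any f, L with L \<rightarrow> \<infinity>, using
   only that f takes its values in {0} \<union> [ln 2, \<infinity>). Condition (b) is the same property of the
   pair ln j, ln(1/\<lambda>\<^sub>j) along the indices with \<lambda>\<^sub>j \<noteq> 0, and the two properties are exchanged
   by the generalised-inverse relation \<lambda>\<^sub>j > \<epsilon>\<^sup>2 \<Longrightarrow> j \<le> j(\<epsilon>): taking \<epsilon> = \<lambda>\<^sub>j gives one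
   direction, and ln(1/\<lambda>\<^bsub>j(\<epsilon>)\<^esub>) < 2 ln(1/\<epsilon>) the other. *)

definition below_all_powr :: "'a filter \<Rightarrow> ('a \<Rightarrow> real) \<Rightarrow> ('a \<Rightarrow> real) \<Rightarrow> bool" where
  "below_all_powr F f L \<longleftrightarrow> (\<forall>\<eta>>0. \<forall>\<^sub>F x in F. f x \<le> L x powr \<eta>)"

lemma tendsto_ln_ratio_0_iff_below_all_powr:
  fixes f L :: "'a \<Rightarrow> real"
  assumes L: "filterlim L at_top F"
    and f: "\<forall>\<^sub>F x in F. f x = 0 \<or> c \<le> f x" and c_pos: "0 < c"
  shows "((\<lambda>x. ln (f x) / ln (L x)) \<longlongrightarrow> 0) F \<longleftrightarrow> below_all_powr F f L"
proof
  have lnL: "filterlim (\<lambda>x. ln (L x)) at_top F"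
    using filterlim_compose[OF ln_at_top L] .
  have lnL_pos: "\<forall>\<^sub>F x in F. 0 < L x \<and> 0 < ln (L x)"
    using L lnL by (simp add: filterlim_at_top_dense eventually_conj)
  {
    assume lim: "((\<lambda>x. ln (f x) / ln (L x)) \<longlongrightarrow> 0) F"
    show "below_all_powr F f L"
      unfolding below_all_powr_def
    proof (intro allI impI)
      fix \<eta> :: real
      assume "\<eta> > 0"
      with lim have "\<forall>\<^sub>F x in F. ln (f x) / ln (L x) < \<eta>"
        by (rule order_tendstoD)
      with lnL_pos show "\<forall>\<^sub>F x in F. f x \<le> L x powr \<eta>"
      proof eventually_elim
        case (elim x)
        show ?case
        proof (cases "0 < f x")
          case True
          have "ln (f x) < \<eta> * ln (L x)"
            using elim by (simp add: divide_less_eq)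
          then have "exp (ln (f x)) < exp (\<eta> * ln (L x))"
            by simp
          with True elim show ?thesis
            by (simp add: powr_def)
        next
          case False
          then show ?thesis
            using powr_ge_zero[of "L x" \<eta>] by linarith
        qed
      qed
    qed
  }
  assume A: "below_all_powr F f L"
  show "((\<lambda>x. ln (f x) / ln (L x)) \<longlongrightarrow> 0) F"
  proof (rule order_tendstoI)
    fix a :: real
    assume "a < 0"
    define m where "m = min 0 (ln c)"
    from lnL have "\<forall>\<^sub>F x in F. m / a < ln (L x)"
      by (simp add: filterlim_at_top_dense)
    with f lnL_pos show "\<forall>\<^sub>F x in F. a < ln (f x) / ln (L x)"
    proof eventually_elim
      case (elim x)
      have "m \<le> ln (f x)"
      proof (cases "f x = 0")
        case False
        with elim c_pos have "ln c \<le> ln (f x)"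
          by (intro ln_mono) auto
        then show ?thesis
          unfolding m_def by linarith
      qed (simp add: m_def)
      moreover have "a * ln (L x) < m"
        using elim \<open>a < 0\<close> by (simp add: divide_less_eq mult.commute)
      ultimately show ?case
        using elim by (simp add: less_divide_eq)
    qed
  next
    fix a :: real
    assume "0 < a"
    then have "\<forall>\<^sub>F x in F. f x \<le> L x powr (a / 2)"
      using A unfolding below_all_powr_def by simp
    with f lnL_pos show "\<forall>\<^sub>F x in F. ln (f x) / ln (L x) < a"
    proof eventually_elim
      case (elim x)
      show ?case
      proof (cases "f x = 0")
        case False
        with elim c_pos have "0 < f x"
          by auto
        with elim have "ln (f x) \<le> a / 2 * ln (L x)"
          using ln_le_cancel_iff[of "f x" "L x powr (a / 2)"] by simp
        also have "\<dots> < a * ln (L x)"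
          using elim \<open>0 < a\<close> by simp
        finally show ?thesis
          using elim by (simp add: divide_less_eq)
      qed (use \<open>0 < a\<close> in simp)
    qed
  qed
qed

lemma tendsto_div_powr_0_iff_below_all_powr:
  fixes f L :: "'a \<Rightarrow> real"
  assumes L: "filterlim L at_top F" and f: "\<forall>\<^sub>F x in F. 0 \<le> f x"
  shows "(\<forall>\<delta>>0. ((\<lambda>x. f x / L x powr \<delta>) \<longlongrightarrow> 0) F) \<longleftrightarrow> below_all_powr F f L"
proof
  have L_pos: "\<forall>\<^sub>F x in F. 0 < L x"
    using L by (simp add: filterlim_at_top_dense)
  {
    assume lim: "\<forall>\<delta>>0. ((\<lambda>x. f x / L x powr \<delta>) \<longlongrightarrow> 0) F"
    show "below_all_powr F f L"
      unfolding below_all_powr_def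
    proof (intro allI impI)
      fix \<eta> :: real
      assume "\<eta> > 0"
      with lim have "((\<lambda>x. f x / L x powr \<eta>) \<longlongrightarrow> 0) F"
        by simp
      then have "\<forall>\<^sub>F x in F. f x / L x powr \<eta> < 1"
        by (rule order_tendstoD) simp
      with L_pos show "\<forall>\<^sub>F x in F. f x \<le> L x powr \<eta>"
        by eventually_elim (simp add: divide_less_eq)
    qed
  }
  assume A: "below_all_powr F f L"
  show "\<forall>\<delta>>0. ((\<lambda>x. f x / L x powr \<delta>) \<longlongrightarrow> 0) F"
  proof (intro allI impI)
    fix \<delta> :: real
    assume "\<delta> > 0"
    then have "\<forall>\<^sub>F x in F. f x \<le> L x powr (\<delta> / 2)"
      using A unfolding below_all_powr_def by simp
    with L_pos have upper: "\<forall>\<^sub>F x in F. f x / L x powr \<delta> \<le> L x powr (- \<delta> / 2)"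
    proof eventually_elim
      case (elim x)
      have "f x / L x powr \<delta> \<le> L x powr (\<delta> / 2) / L x powr \<delta>"
        using elim by (simp add: divide_right_mono)
      also have "\<dots> = L x powr (- \<delta> / 2)"
        by (simp flip: powr_diff)
      finally show ?case .
    qed
    have lower: "\<forall>\<^sub>F x in F. 0 \<le> f x / L x powr \<delta>"
      using f by eventually_elim simp
    show "((\<lambda>x. f x / L x powr \<delta>) \<longlongrightarrow> 0) F"
      using tendsto_sandwich[OF lower upper tendsto_const tendsto_neg_powr[OF _ L]] \<open>\<delta> > 0\<close>
      by simp
  qed
qed

lemma ln_ratio_unbounded_iff_below_all_powr:
  fixes f L :: "'a \<Rightarrow> real"
  assumes f: "filterlim f at_top F" and L: "filterlim L at_top F"
  shows "(\<forall>M. \<forall>\<^sub>F x in F. ln (L x) / ln (f x) > M) \<longleftrightarrow> below_all_powr F f L"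
proof
  have pos: "\<forall>\<^sub>F x in F. 1 < f x \<and> 0 < L x"
    using f L by (simp add: filterlim_at_top_dense eventually_conj)
  {
    assume unb: "\<forall>M. \<forall>\<^sub>F x in F. ln (L x) / ln (f x) > M"
    show "below_all_powr F f L"
      unfolding below_all_powr_def
    proof (intro allI impI)
      fix \<eta> :: real
      assume "\<eta> > 0"
      from pos unb[rule_format, of "1 / \<eta>"] show "\<forall>\<^sub>F x in F. f x \<le> L x powr \<eta>"
      proof eventually_elim
        case (elim x)
        then have "ln (f x) < \<eta> * ln (L x)"
          using \<open>\<eta> > 0\<close> by (simp add: field_simps)
        then have "exp (ln (f x)) < exp (\<eta> * ln (L x))"
          by simp
        with elim show ?case
          by (simp add: powr_def)
      qed
    qed
  }
  assume A: "below_all_powr F f L"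
  show "\<forall>M. \<forall>\<^sub>F x in F. ln (L x) / ln (f x) > M"
  proof
    fix M :: real
    have "\<forall>\<^sub>F x in F. f x \<le> L x powr (1 / (\<bar>M\<bar> + 1))"
      using A unfolding below_all_powr_def by simp
    with pos show "\<forall>\<^sub>F x in F. ln (L x) / ln (f x) > M"
    proof eventually_elim
      case (elim x)
      then have "ln (f x) \<le> ln (L x) / (\<bar>M\<bar> + 1)"
        using ln_le_cancel_iff[of "f x" "L x powr (1 / (\<bar>M\<bar> + 1))"] by simp
      then have "(\<bar>M\<bar> + 1) * ln (f x) \<le> ln (L x)"
        by (simp add: field_simps)
      moreover have "0 < ln (f x)"
        using elim by simp
      moreover from this have "M * ln (f x) < (\<bar>M\<bar> + 1) * ln (f x)"
        by (intro mult_strict_right_mono) auto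
      ultimately have "M * ln (f x) < ln (L x)"
        by linarith
      with \<open>0 < ln (f x)\<close> show ?case
        by (simp add: less_divide_eq)
    qed
  qed
qed

lemma finite_jeps_set:
  fixes lam :: "nat \<Rightarrow> real"
  assumes lim: "lam \<longlonglongrightarrow> 0" and "\<epsilon> \<noteq> 0"
  shows "finite {j. 1 \<le> j \<and> lam j > \<epsilon>\<^sup>2}"
proof -
  from \<open>\<epsilon> \<noteq> 0\<close> have "\<forall>\<^sub>F j in sequentially. \<not> lam j > \<epsilon>\<^sup>2"
    using order_tendstoD(2)[OF lim, of "\<epsilon>\<^sup>2"] by (auto elim: eventually_mono)
  then have "finite {j. lam j > \<epsilon>\<^sup>2}"
    by (simp add: eventually_cofinite flip: cofinite_eq_sequentially)
  then show ?thesis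
    by (rule rev_finite_subset) auto
qed

lemma le_jeps:
  fixes lam :: "nat \<Rightarrow> real"
  assumes "lam \<longlonglongrightarrow> 0" "\<epsilon> \<noteq> 0" "1 \<le> j" "lam j > \<epsilon>\<^sup>2"
  shows "j \<le> jeps lam \<epsilon>"
  unfolding jeps_def using assms finite_jeps_set by (intro Max_ge) auto

lemma jeps_mem:
  fixes lam :: "nat \<Rightarrow> real"
  assumes lim: "lam \<longlonglongrightarrow> 0" and one: "lam 1 = 1" and "0 < \<epsilon>" "\<epsilon> < 1"
  shows "1 \<le> jeps lam \<epsilon> \<and> lam (jeps lam \<epsilon>) > \<epsilon>\<^sup>2"
proof -
  have "\<epsilon>\<^sup>2 < 1"
    using assms by (simp add: power_less_one_iff)
  with one have "1 \<in> {j. 1 \<le> j \<and> lam j > \<epsilon>\<^sup>2}"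
    by simp
  then have "jeps lam \<epsilon> \<in> {j. 1 \<le> j \<and> lam j > \<epsilon>\<^sup>2}"
    unfolding jeps_def using finite_jeps_set[OF lim] \<open>0 < \<epsilon>\<close> by (intro Max_in) auto
  then show ?thesis
    by simp
qed

lemma filterlim_ln_inverse_nonzero_at_top:
  fixes f :: "'a \<Rightarrow> real"
  assumes lim: "(f \<longlongrightarrow> 0) F" and nonneg: "\<forall>\<^sub>F x in F. 0 \<le> f x"
  shows "filterlim (\<lambda>x. ln (1 / f x)) at_top (inf F (principal {x. f x \<noteq> 0}))"
proof -
  have "\<forall>\<^sub>F x in inf F (principal {x. f x \<noteq> 0}). 0 < f x"
    using nonneg unfolding eventually_inf_principal by (auto elim: eventually_mono)
  moreover have "(f \<longlongrightarrow> 0) (inf F (principal {x. f x \<noteq> 0}))"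
    using lim by (rule tendsto_mono[rotated]) simp
  ultimately have "filterlim f (at_right 0) (inf F (principal {x. f x \<noteq> 0}))"
    by (intro tendsto_imp_filterlim_at_right)
  then show ?thesis
    unfolding inverse_eq_divide[symmetric]
    by (intro filterlim_compose[OF ln_at_top] filterlim_compose[OF filterlim_inverse_at_top_right])
qed

lemma ln_inverse_powr_half_le:
  fixes x \<epsilon> \<eta> :: real
  assumes "\<epsilon>\<^sup>2 < x" "x < 1" "0 < \<epsilon>" "2 \<le> ln (1 / \<epsilon>)" "0 \<le> \<eta>"
  shows "ln (1 / x) powr (\<eta> / 2) \<le> ln (1 / \<epsilon>) powr \<eta>"
proof -
  define L where "L = ln (1 / \<epsilon>)"
  have "2 \<le> L"
    using assms unfolding L_def by simp
  have "0 < x"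
    using assms by (smt (verit) zero_less_power)
  have "ln (1 / x) < ln (1 / \<epsilon>\<^sup>2)"
    using assms \<open>0 < x\<close> by (simp add: divide_strict_left_mono)
  also have "\<dots> = 2 * L"
    unfolding L_def using assms by (simp add: ln_div ln_realpow)
  also have "\<dots> \<le> L * L"
    using \<open>2 \<le> L\<close> by (intro mult_right_mono) auto
  finally have "ln (1 / x) powr (\<eta> / 2) \<le> (L * L) powr (\<eta> / 2)"
    using assms \<open>0 < x\<close> by (intro powr_mono2) auto
  also have "\<dots> = L powr \<eta>"
    using \<open>2 \<le> L\<close> by (simp add: powr_mult flip: powr_add)
  finally show ?thesis
    unfolding L_def .
qed

lemma below_all_powr_nonzero_terms_imp_jeps:
  fixes lam :: "nat \<Rightarrow> real"
  assumes lim: "lam \<longlonglongrightarrow> 0" and one: "lam 1 = 1"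
    and seq: "below_all_powr (inf sequentially (principal {j. lam j \<noteq> 0}))
                (\<lambda>j. ln (real j)) (\<lambda>j. ln (1 / lam j))"
  shows "below_all_powr (at_right 0) (\<lambda>\<epsilon>. ln (real (jeps lam \<epsilon>))) (\<lambda>\<epsilon>. ln (1 / \<epsilon>))"
  unfolding below_all_powr_def
proof (intro allI impI)
  fix \<eta> :: real
  assume "\<eta> > 0"
  have "\<forall>\<^sub>F j in sequentially. (lam j \<noteq> 0 \<longrightarrow> ln (real j) \<le> ln (1 / lam j) powr (\<eta> / 2)) \<and> lam j < 1"
    using seq \<open>\<eta> > 0\<close> order_tendstoD(2)[OF lim zero_less_one]
    unfolding below_all_powr_def eventually_inf_principal by (auto intro: eventually_conj)
  then obtain N where N: "\<And>j. N \<le> j \<Longrightarrow>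
      (lam j \<noteq> 0 \<longrightarrow> ln (real j) \<le> ln (1 / lam j) powr (\<eta> / 2)) \<and> lam j < 1"
    unfolding eventually_sequentially by blast
  have "\<forall>\<^sub>F \<epsilon> in at_right 0. 0 < \<epsilon> \<and> \<epsilon> < (1::real)"
    by (auto simp: eventually_at_right_field intro: exI[of _ 1])
  moreover have "\<forall>\<^sub>F \<epsilon> in at_right 0. 2 \<le> ln (1 / \<epsilon>::real)"
    by real_asymp
  moreover have "filterlim (\<lambda>\<epsilon>. ln (1 / \<epsilon>::real) powr \<eta>) at_top (at_right 0)"
    using \<open>\<eta> > 0\<close> by real_asymp
  then have "\<forall>\<^sub>F \<epsilon> in at_right 0. ln (real N) < ln (1 / \<epsilon>) powr \<eta>"
    by (simp add: filterlim_at_top_dense)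
  ultimately show "\<forall>\<^sub>F \<epsilon> in at_right 0. ln (real (jeps lam \<epsilon>)) \<le> ln (1 / \<epsilon>) powr \<eta>"
  proof eventually_elim
    case (elim \<epsilon>)
    define j where "j = jeps lam \<epsilon>"
    define L where "L = ln (1 / \<epsilon>)"
    have j: "1 \<le> j" "\<epsilon>\<^sup>2 < lam j"
      using jeps_mem[OF lim one] elim unfolding j_def by auto
    have "ln (real j) \<le> L powr \<eta>"
    proof (cases "j < N")
      case True
      with j have "ln (real j) \<le> ln (real N)"
        by simp
      with elim show ?thesis
        unfolding L_def by linarith
    next
      case False
      have lam_j: "0 < lam j" "lam j < 1"
        using j N[of j] False elim by (auto intro: less_trans[OF zero_less_power])
      have "ln (real j) \<le> ln (1 / lam j) powr (\<eta> / 2)"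
        using N[of j] False lam_j by simp
      also have "\<dots> \<le> L powr \<eta>"
        unfolding L_def using j lam_j elim \<open>\<eta> > 0\<close> by (intro ln_inverse_powr_half_le) auto
      finally show ?thesis .
    qed
    then show ?case
      unfolding j_def L_def .
  qed
qed

lemma below_all_powr_jeps_imp_nonzero_terms:
  fixes lam :: "nat \<Rightarrow> real"
  assumes nonneg: "\<And>j. 1 \<le> j \<Longrightarrow> 0 \<le> lam j" and lim: "lam \<longlonglongrightarrow> 0"
    and A: "below_all_powr (at_right 0) (\<lambda>\<epsilon>. ln (real (jeps lam \<epsilon>))) (\<lambda>\<epsilon>. ln (1 / \<epsilon>))"
  shows "below_all_powr (inf sequentially (principal {j. lam j \<noteq> 0}))
           (\<lambda>j. ln (real j)) (\<lambda>j. ln (1 / lam j))"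
  unfolding below_all_powr_def eventually_inf_principal
proof (intro allI impI)
  fix \<eta> :: real
  assume "\<eta> > 0"
  with A obtain b where b: "0 < b"
    "\<And>\<epsilon>. 0 < \<epsilon> \<Longrightarrow> \<epsilon> < b \<Longrightarrow> ln (real (jeps lam \<epsilon>)) \<le> ln (1 / \<epsilon>) powr \<eta>"
    unfolding below_all_powr_def eventually_at_right_field by auto
  have "\<forall>\<^sub>F j in sequentially. 1 \<le> j \<and> lam j < min b 1"
    using order_tendstoD(2)[OF lim, of "min b 1"] b(1)
    by (auto intro: eventually_conj eventually_ge_at_top)
  then show "\<forall>\<^sub>F j in sequentially. j \<in> {j. lam j \<noteq> 0} \<longrightarrow> ln (real j) \<le> ln (1 / lam j) powr \<eta>"
  proof eventually_elim
    case (elim j)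
    show ?case
    proof
      assume "j \<in> {j. lam j \<noteq> 0}"
      with nonneg[of j] elim have lam_j: "0 < lam j" "lam j < 1" "lam j < b"
        by auto
      have "j \<le> jeps lam (lam j)"
        using lam_j elim by (intro le_jeps[OF lim]) (auto simp: power2_eq_square)
      with elim have "ln (real j) \<le> ln (real (jeps lam (lam j)))"
        by simp
      also have "\<dots> \<le> ln (1 / lam j) powr \<eta>"
        using b(2) lam_j by simp
      finally show "ln (real j) \<le> ln (1 / lam j) powr \<eta>" .
    qed
  qed
qed

theorem lemma2:
  fixes lam :: "nat \<Rightarrow> real"
  assumes nonneg: "\<And>j. 1 \<le> j \<Longrightarrow> 0 \<le> lam j"
    and noninc: "\<And>i j. 1 \<le> i \<Longrightarrow> i \<le> j \<Longrightarrow> lam j \<le> lam i"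
    and one: "lam 1 = 1"
    and lim: "lam \<longlonglongrightarrow> 0"
  shows "((((\<lambda>\<epsilon>. ln (ln (real (jeps lam \<epsilon>))) / ln (ln (1 / \<epsilon>))) \<longlongrightarrow> 0) (at_right 0))
     \<longleftrightarrow> (\<forall>M::real. \<forall>\<^sub>F j in sequentially.
              lam j = 0 \<or> ln (ln (1 / lam j)) / ln (ln (real j)) > M))
     \<and> ((\<forall>M::real. \<forall>\<^sub>F j in sequentially.
              lam j = 0 \<or> ln (ln (1 / lam j)) / ln (ln (real j)) > M)
     \<longleftrightarrow> (\<forall>\<delta>::real. \<delta> > 0 \<longrightarrow>
           ((\<lambda>\<epsilon>. ln (real (jeps lam \<epsilon>)) / (ln (1 / \<epsilon>)) powr \<delta>) \<longlongrightarrow> 0) (at_right 0)))"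
proof -
  let ?F = "inf sequentially (principal {j. lam j \<noteq> 0})"
  let ?A = "below_all_powr (at_right 0) (\<lambda>\<epsilon>. ln (real (jeps lam \<epsilon>))) (\<lambda>\<epsilon>. ln (1 / \<epsilon>))"
  have L: "filterlim (\<lambda>\<epsilon>. ln (1 / \<epsilon>::real)) at_top (at_right 0)"
    by real_asymp
  have "\<forall>\<^sub>F \<epsilon> in at_right 0. 1 \<le> jeps lam \<epsilon>"
    unfolding eventually_at_right_field using jeps_mem[OF lim one]
    by (intro exI[of _ 1]) auto
  then have jeps_cases: "\<forall>\<^sub>F \<epsilon> in at_right 0. jeps lam \<epsilon> = 1 \<or> 2 \<le> jeps lam \<epsilon>"
    by (rule eventually_mono) auto
  have a: "((\<lambda>\<epsilon>. ln (ln (real (jeps lam \<epsilon>))) / ln (ln (1 / \<epsilon>))) \<longlongrightarrow> 0) (at_right 0) \<longleftrightarrow> ?A"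
    using jeps_cases
    by (intro tendsto_ln_ratio_0_iff_below_all_powr[OF L, of _ "ln 2"])
       (auto elim!: eventually_mono)
  have c: "(\<forall>\<delta>>0. ((\<lambda>\<epsilon>. ln (real (jeps lam \<epsilon>)) / ln (1 / \<epsilon>) powr \<delta>) \<longlongrightarrow> 0) (at_right 0)) \<longleftrightarrow> ?A"
    using jeps_cases by (intro tendsto_div_powr_0_iff_below_all_powr[OF L]) (auto elim!: eventually_mono)
  have lnj: "filterlim (\<lambda>j. ln (real j)) at_top ?F"
    by (rule filterlim_mono[OF _ order_refl inf_le1]) real_asymp
  have "\<forall>\<^sub>F j in sequentially. 0 \<le> lam j"
    unfolding eventually_sequentially using nonneg by blast
  then have ln_inverse: "filterlim (\<lambda>j. ln (1 / lam j)) at_top ?F"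
    by (rule filterlim_ln_inverse_nonzero_at_top[OF lim])
  have "(\<forall>M. \<forall>\<^sub>F j in sequentially. lam j = 0 \<or> ln (ln (1 / lam j)) / ln (ln (real j)) > M)
      \<longleftrightarrow> below_all_powr ?F (\<lambda>j. ln (real j)) (\<lambda>j. ln (1 / lam j))"
    using ln_ratio_unbounded_iff_below_all_powr[OF lnj ln_inverse]
    by (simp add: eventually_inf_principal imp_conv_disj)
  also have "\<dots> \<longleftrightarrow> ?A"
    using below_all_powr_nonzero_terms_imp_jeps[OF lim one]
      below_all_powr_jeps_imp_nonzero_terms[OF nonneg lim] by blast
  finally show ?thesis
    using a c by blast
qed

end
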